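(* Let $(q_j)$ be a sequence of primes tending to infinity and, for each $j$, let $\chi_j$ be a Dirichlet character modulo $q_j$. For $t\ge0$ set $$A_j(t)=\frac{1}{\log q_j}\sum_{n<q_j^t}\frac{\chi_j(n)}{n},\qquad B_j(t)=\frac{1}{\log q_j}\sum_{n<q_j^t}\frac{\chi_j(n)\Lambda(n)}{n}.$$ Suppose that there are functions $A,B:[0,\infty)\to\mathbb C$ with $A_j(t)\to A(t)$ and $B_j(t)\to B(t)$ as $j\to\infty$ for every $t\ge0$, and that $|A(t)-A(s)|,|B(t)-B(s)|\le|t-s|$ for all $s,t\ge0$ (so that $A(t)=\int_0^t a(u)\,du$, $B(t)=\int_0^t b(u)\,du$ for measurable $a,b:[0,\infty)\to\mathbb C$ bounded in magnitude by $1$). Then $$ t\,a(t)=\int_0^t a(u)\,b(t-u)\,du$$ for almost every $t>0$.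
   Context: $\Lambda$ is the von Mangoldt function. *)

theory Defs
  imports "HOL-Analysis.Analysis" "HOL-Number_Theory.Number_Theory"
begin

definition mangoldt :: "nat \<Rightarrow> real" where
  "mangoldt n = (if primepow n then ln (real (aprimedivisor n)) else 0)"

definition dirichlet_char :: "nat \<Rightarrow> (nat \<Rightarrow> complex) \<Rightarrow> bool" where
  "dirichlet_char q chi \<longleftrightarrow>
     q > 0 \<and>
     (\<forall>n. chi (n + q) = chi n) \<and>
     (\<forall>m n. chi (m * n) = chi m * chi n) \<and>
     chi 1 = 1 \<and>
     (\<forall>n. chi n = 0 \<longleftrightarrow> \<not> coprime n q)"

definition charA :: "nat \<Rightarrow> (nat \<Rightarrow> complex) \<Rightarrow> real \<Rightarrow> complex" where
  "charA q chi t = (\<Sum>n\<in>{n. 1 \<le> n \<and> real n < real q powr t}. chi n / of_nat n) / of_real (ln (real q))"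

definition charB :: "nat \<Rightarrow> (nat \<Rightarrow> complex) \<Rightarrow> real \<Rightarrow> complex" where
  "charB q chi t = (\<Sum>n\<in>{n. 1 \<le> n \<and> real n < real q powr t}.
                     chi n * of_real (mangoldt n) / of_nat n) / of_real (ln (real q))"

end

theory Submission
  imports Defs
begin

text \<open>
  Write \<open>L = log q\<close>, \<open>v(d) = log d / L\<close> and
  \<open>\<beta>(d) = \<chi>(d)\<Lambda>(d)/(d L)\<close>.  Since \<open>log = 1 * \<Lambda>\<close> and \<open>\<chi>\<close> is completely multiplicative,
    \<open>(1/L\<^sup>2) \<Sum>_{n<q^t} \<chi>(n) log n / n = \<Sum>_{d<q^t} \<beta>(d) A\<^sub>j(t - v(d))\<close>.
  By Abel summation the left side is \<open>\<integral>\<^sub>0\<^sup>t (A\<^sub>j(t) - A\<^sub>j(u)) du\<close>, which tends to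
  \<open>\<integral>\<^sub>0\<^sup>t (A(t) - A(u)) du = \<integral>\<^sub>0\<^sup>t u a(u) du\<close>.  On the right, \<open>A\<^sub>j \<rightarrow> A\<close> uniformly on \<open>[0,t]\<close>
  (pointwise convergence plus equicontinuity up to \<open>O(1/L)\<close>) and \<open>\<Sum> |\<beta>(d)| = O(t)\<close> by a
  Chebyshev bound, so we may replace \<open>A\<^sub>j\<close> by \<open>A\<close>; Abel summation again turns
  \<open>\<Sum> \<beta>(d) A(t - v(d))\<close> into \<open>\<integral>\<^sub>0\<^sup>t a(s) B\<^sub>j(t-s) ds\<close>, which tends to
  \<open>\<integral>\<^sub>0\<^sup>t a(s) B(t-s) ds = \<integral>\<^sub>0\<^sup>t (a * b)(r) dr\<close>.  Hence \<open>u a(u) - (a * b)(u)\<close> has vanishing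
  integral over every \<open>[0,t]\<close>, so it vanishes almost everywhere.
\<close>

abbreviation nats_below :: "real \<Rightarrow> nat set" where
  "nats_below x \<equiv> {n. 1 \<le> n \<and> real n < x}"

lemma finite_nats_below: "finite {n::nat. P n \<and> real n < x}"
  by (rule finite_subset[of _ "{..nat \<lceil>x\<rceil>}"]) (auto, linarith)

lemma mangoldt_eq_library: "Defs.mangoldt n = (Prime_Powers.mangoldt n :: real)"
  by (simp add: Defs.mangoldt_def Prime_Powers.mangoldt_def)

lemma mangoldt_nonneg_Defs: "Defs.mangoldt d \<ge> 0"
  by (simp add: mangoldt_eq_library mangoldt_nonneg)

text \<open>The identity \<open>log = 1 * \<Lambda>\<close>, twisted by a completely multiplicative \<open>f\<close> and truncated
  at \<open>x\<close>: the key algebraic input to the argument.\<close>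

lemma sum_log_convolution:
  fixes f :: "nat \<Rightarrow> 'a::real_normed_field" and x :: real
  assumes mult: "\<And>m n. f (m*n) = f m * f n"
  shows "(\<Sum>n\<in>nats_below x. f n * of_real (ln (real n)) / of_nat n) =
         (\<Sum>d\<in>nats_below x. f d * of_real (Defs.mangoldt d) / of_nat d *
              (\<Sum>m\<in>nats_below (x / real d). f m / of_nat m))"
proof -
  define S where "S = nats_below x"
  define T where "T = (\<lambda>d::nat. nats_below (x / real d))"
  have finS: "finite S" and finT: "finite (T d)" for d
    unfolding S_def T_def by (rule finite_nats_below)+
  have "(\<Sum>n\<in>S. f n * of_real (ln (real n)) / of_nat n) =
        (\<Sum>n\<in>S. \<Sum>d\<in>{d. d dvd n}. f n * of_real (Defs.mangoldt d) / of_nat n)"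
  proof (rule sum.cong[OF refl])
    fix n assume "n \<in> S"
    then have "(\<Sum>d | d dvd n. Prime_Powers.mangoldt d :: 'a) = of_real (ln (real n))"
      by (intro mangoldt_sum) (auto simp: S_def)
    then have eq: "(\<Sum>d\<in>{d. d dvd n}. of_real (Defs.mangoldt d)) = (of_real (ln (real n)) :: 'a)"
      by (simp add: mangoldt_eq_library)
    show "f n * of_real (ln (real n)) / of_nat n =
          (\<Sum>d\<in>{d. d dvd n}. f n * of_real (Defs.mangoldt d) / of_nat n)"
      by (subst eq[symmetric]) (simp add: sum_distrib_left sum_divide_distrib)
  qed
  also have "\<dots> = (\<Sum>(n,d)\<in>Sigma S (\<lambda>n. {d. d dvd n}). f n * of_real (Defs.mangoldt d) / of_nat n)"
    by (rule sum.Sigma) (use finS in \<open>auto simp: S_def\<close>)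
  also have "\<dots> = (\<Sum>(d,m)\<in>Sigma S T. f d * of_real (Defs.mangoldt d) / of_nat d * (f m / of_nat m))"
  proof (rule sum.reindex_bij_witness[of _ "\<lambda>(d,m). (d*m, d)" "\<lambda>(n,d). (d, n div d)"])
    fix p assume "p \<in> Sigma S T"
    then obtain d m where p: "p = (d,m)" "1\<le>d" "real d < x" "1 \<le> m" "real m < x / real d"
      by (auto simp: S_def T_def)
    have "real d * real m < x" using p by (simp add: field_simps)
    then show "(case case p of (d, m) \<Rightarrow> (d * m, d) of (n, d) \<Rightarrow> (d, n div d)) = p"
      "(case p of (d, m) \<Rightarrow> (d * m, d)) \<in> Sigma S (\<lambda>n. {d. d dvd n})"
      using p by (auto simp: S_def)
  next
    fix p assume "p \<in> Sigma S (\<lambda>n. {d. d dvd n})"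
    then obtain n d where p: "p = (n,d)" "1\<le>n" "real n < x" "d dvd n"
      by (auto simp: S_def)
    then obtain m where m: "n = d * m" by (auto elim: dvdE)
    have "d \<ge> 1" "m \<ge> 1" using p m by (auto simp: Suc_le_eq intro: Nat.gr0I)
    have "real d * real m < x" using p m by simp
    then have "real m < x / real d" using \<open>d \<ge> 1\<close> by (simp add: field_simps)
    moreover have "d \<le> n" using m \<open>m \<ge> 1\<close> by simp
    then have "real d \<le> real n" by simp
    then have "real d < x" using p(3) by linarith
    ultimately show "(case case p of (n, d) \<Rightarrow> (d, n div d) of (d, m) \<Rightarrow> (d * m, d)) = p"
       "(case p of (n, d) \<Rightarrow> (d, n div d)) \<in> Sigma S T"
      using p m \<open>d \<ge> 1\<close> \<open>m \<ge> 1\<close> by (auto simp: S_def T_def)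
    show "(case case p of (n, d) \<Rightarrow> (d, n div d) of
             (d, m) \<Rightarrow> f d * of_real (Defs.mangoldt d) / of_nat d * (f m / of_nat m)) =
          (case p of (n, d) \<Rightarrow> f n * of_real (Defs.mangoldt d) / of_nat n)"
      using p m \<open>d \<ge> 1\<close> \<open>m \<ge> 1\<close> by (simp add: mult)
  qed
  also have "\<dots> = (\<Sum>d\<in>S. \<Sum>m\<in>T d. f d * of_real (Defs.mangoldt d) / of_nat d * (f m / of_nat m))"
    by (rule sum.Sigma[symmetric]) (use finS finT in auto)
  also have "\<dots> = (\<Sum>d\<in>S. f d * of_real (Defs.mangoldt d) / of_nat d * (\<Sum>m\<in>T d. f m / of_nat m))"
    by (simp add: sum_distrib_left)
  finally show ?thesis by (simp add: S_def T_def)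
qed

definition harm_below :: "real \<Rightarrow> real" where
  "harm_below y = (\<Sum>m\<in>nats_below y. 1 / real m)"

lemma harm_below_eq_harm: "harm_below y = harm (nat \<lceil>y\<rceil> - 1)"
proof -
  have "nats_below y = {1..nat \<lceil>y\<rceil> - 1}"
    by (auto simp: less_ceiling_iff) linarith+
  then show ?thesis by (simp add: harm_below_def harm_def divide_inverse)
qed

lemma ln_le_harm_below: assumes "y > 0" shows "ln y \<le> harm_below y"
proof -
  define N where "N = nat \<lceil>y\<rceil> - 1"
  have "y \<le> real N + 1" using assms unfolding N_def by linarith
  then have "ln y \<le> ln (real N + 1)" using assms by simp
  also have "\<dots> \<le> harm N" by (rule ln_le_harm)
  finally show ?thesis by (simp add: harm_below_eq_harm N_def)
qed

lemma harm_below_le: assumes "y \<ge> 1" shows "harm_below y \<le> 1 + ln y"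
proof -
  define N where "N = nat \<lceil>y\<rceil> - 1"
  have Ny: "real N < y" unfolding N_def using assms by linarith
  have "harm N \<le> 1 + ln y"
  proof (cases "N = 0")
    case True
    then show ?thesis using assms by (simp add: harm_def)
  next
    case False
    have "harm N - ln (real N) \<le> harm 1 - ln (real (1::nat))"
      by (rule euler_mascheroni_sequence_decreasing) (use False in auto)
    moreover have "ln (real N) \<le> ln y" using Ny False assms by simp
    ultimately show ?thesis by (simp add: harm_def)
  qed
  then show ?thesis by (simp add: harm_below_eq_harm N_def)
qed

text \<open>A Chebyshev--Mertens bound \<open>\<Sum>_{d<x} \<Lambda>(d)/d \<le> 2 + 4 log x\<close>, obtained from the convolution
  identity with \<open>f = 1\<close> evaluated at \<open>X = x\<^sup>2\<close>.\<close>

lemma mangoldt_harmonic_bound: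
  assumes "x \<ge> 1"
  shows "(\<Sum>d\<in>nats_below x. Defs.mangoldt d / real d) \<le> 2 + 4 * ln x"
proof (cases "x = 1")
  case True
  then have "nats_below x = {}" by auto
  then show ?thesis using True by simp
next
  case False
  then have x1: "x > 1" using assms by simp
  define X where "X = x * x"
  have X1: "X > 1" using x1 by (simp add: X_def less_1_mult)
  have xX: "x < X" using mult_strict_left_mono[of 1 x x] x1 by (simp add: X_def)
  define s where "s = (\<Sum>d\<in>nats_below x. Defs.mangoldt d / real d)"
  have lnX: "ln X = 2 * ln x" using x1 by (simp add: X_def ln_mult)
  have "ln x * s = (\<Sum>d\<in>nats_below x. Defs.mangoldt d / real d * ln x)"
    by (simp add: s_def sum_distrib_left mult.commute)
  also have "\<dots> \<le> (\<Sum>d\<in>nats_below x. Defs.mangoldt d / real d * ln (X / real d))"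
  proof (rule sum_mono)
    fix d assume d: "d \<in> nats_below x"
    then have "ln x \<le> ln (X / real d)" using x1 X1 by (simp add: ln_div lnX)
    then show "Defs.mangoldt d / real d * ln x \<le> Defs.mangoldt d / real d * ln (X / real d)"
      by (intro mult_left_mono) (auto intro: divide_nonneg_nonneg mangoldt_nonneg_Defs)
  qed
  also have "\<dots> \<le> (\<Sum>d\<in>nats_below X. Defs.mangoldt d / real d * ln (X / real d))"
    by (rule sum_mono2[OF finite_nats_below])
       (use xX in \<open>auto intro!: mult_nonneg_nonneg divide_nonneg_nonneg mangoldt_nonneg_Defs\<close>)
  also have "\<dots> \<le> (\<Sum>d\<in>nats_below X. Defs.mangoldt d / real d * harm_below (X / real d))"
    by (intro sum_mono mult_left_mono ln_le_harm_below divide_nonneg_nonneg mangoldt_nonneg_Defs)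
       (use X1 in auto)
  also have "\<dots> = (\<Sum>n\<in>nats_below X. 1 * ln (real n) / real n)"
    using sum_log_convolution[of "\<lambda>_. 1::real" X] by (simp add: harm_below_def sum_divide_distrib)
  also have "\<dots> \<le> (\<Sum>n\<in>nats_below X. ln X * (1 / real n))"
    by (intro sum_mono) (auto simp: divide_right_mono)
  also have "\<dots> = ln X * harm_below X" by (simp add: harm_below_def sum_distrib_left)
  also have "\<dots> \<le> ln X * (1 + ln X)"
    using X1 by (intro mult_left_mono harm_below_le) auto
  finally have "ln x * s \<le> ln x * (2 + 4 * ln x)" by (simp add: lnX algebra_simps)
  then show ?thesis using x1 by (simp add: s_def mult_le_cancel_left)
qed

text \<open>Dirichlet characters take values in the closed unit disc (Euler's theorem).\<close>

lemma dirichlet_char_norm_le_1: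
  assumes "dirichlet_char q chi"
  shows "norm (chi n) \<le> 1"
proof -
  have q: "q > 0" and per: "\<And>n. chi (n + q) = chi n" and mult: "\<And>m n. chi (m*n) = chi m * chi n"
    and one: "chi 1 = 1" and zero: "\<And>n. chi n = 0 \<longleftrightarrow> \<not> coprime n q"
    using assms by (auto simp: dirichlet_char_def)
  have periodic: "chi (r + k*q) = chi r" for r k
  proof (induction k)
    case (Suc k)
    have "chi (r + Suc k * q) = chi ((r + k*q) + q)" by (simp add: algebra_simps)
    then show ?case using Suc per by simp
  qed simp
  have chi_mod: "chi n = chi (n mod q)" for n
    using periodic[of "n mod q" "n div q"] by (simp add: mod_div_mult_eq)
  have chi_power: "chi (n^k) = chi n ^ k" for k
    by (induction k) (use one in \<open>simp_all add: mult\<close>)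
  show ?thesis
  proof (cases "coprime n q")
    case False
    then have "chi n = 0" using zero by blast
    then show ?thesis by simp
  next
    case True
    have "[n ^ totient q = 1] (mod q)" by (rule euler_theorem) (use True in auto)
    then have "chi (n ^ totient q) = chi 1" by (metis chi_mod cong_def)
    then have "norm (chi n) ^ totient q = 1" by (metis chi_power one norm_power norm_one)
    moreover have "totient q > 0" using q by simp
    ultimately show ?thesis
      using power_eq_iff_eq_base[of "totient q" "norm (chi n)" 1] by simp
  qed
qed


lemma bounded_set_integrable:
  fixes g :: "real \<Rightarrow> 'b::{banach, second_countable_topology}"
  assumes g[measurable]: "g \<in> borel_measurable borel" and A[measurable]: "A \<in> sets borel"
    and fin: "emeasure lborel A < \<infinity>" and bnd: "\<And>x. x \<in> A \<Longrightarrow> norm (g x) \<le> C"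
  shows "set_integrable lborel A g"
  unfolding set_integrable_def
proof (rule Bochner_Integration.integrable_bound[where f="\<lambda>x. C * indicator A x"])
  show "integrable lborel (\<lambda>x. C * indicator A x)"
    using fin by (intro integrable_mult_right integrable_real_indicator) auto
  show "AE x in lborel. norm (indicator A x *\<^sub>R g x) \<le> norm (C * indicator A x)"
  proof (intro AE_I2)
    fix x show "norm (indicator A x *\<^sub>R g x) \<le> norm (C * indicator A x)"
      using bnd[of x] by (cases "x \<in> A") simp_all
  qed
qed simp

lemma bounded_set_integral_norm:
  fixes g :: "real \<Rightarrow> 'b::{banach, second_countable_topology}"
  assumes g[measurable]: "g \<in> borel_measurable borel" and A[measurable]: "A \<in> sets borel"
    and fin: "emeasure lborel A < \<infinity>" and bnd: "\<And>x. x \<in> A \<Longrightarrow> norm (g x) \<le> C"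
  shows "norm (LINT x:A|lborel. g x) \<le> C * measure lborel A"
proof -
  have "norm (LINT x:A|lborel. g x) \<le> (LINT x:A|lborel. norm (g x))"
    by (rule set_integral_norm_bound[OF bounded_set_integrable[OF g A fin bnd]])
  also have "\<dots> \<le> (LINT x:A|lborel. C)"
  proof (rule set_integral_mono)
    show "set_integrable lborel A (\<lambda>x. norm (g x))"
      using fin bnd by (intro bounded_set_integrable[where C=C]) auto
    show "set_integrable lborel A (\<lambda>x. C)"
      using fin by (intro bounded_set_integrable[where C="norm C"]) auto
  qed (use bnd in auto)
  also have "\<dots> = C * measure lborel A"
    using fin by (subst set_integral_const) auto
  finally show ?thesis .
qed

lemma set_integral_bounded_convergence:
  fixes F :: "nat \<Rightarrow> 'a \<Rightarrow> 'b::{banach, second_countable_topology}"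
  assumes F[measurable]: "\<And>j. F j \<in> borel_measurable M" and G[measurable]: "G \<in> borel_measurable M"
    and S[measurable]: "S \<in> sets M" and fin: "emeasure M S < \<infinity>"
    and bnd: "\<And>j x. x \<in> S \<Longrightarrow> norm (F j x) \<le> C"
    and lim: "\<And>x. x \<in> S \<Longrightarrow> (\<lambda>j. F j x) \<longlonglongrightarrow> G x"
  shows "(\<lambda>j. LINT x:S|M. F j x) \<longlonglongrightarrow> (LINT x:S|M. G x)"
  unfolding set_lebesgue_integral_def
proof (rule integral_dominated_convergence[where w="\<lambda>x. C * indicator S x"])
  show "integrable M (\<lambda>x. C * indicator S x)"
    using fin by (intro integrable_mult_right integrable_real_indicator) auto
  show "AE x in M. (\<lambda>j. indicator S x *\<^sub>R F j x) \<longlonglongrightarrow> indicator S x *\<^sub>R G x"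
    using lim by (intro AE_I2) (auto simp: indicator_def)
  show "AE x in M. norm (indicator S x *\<^sub>R F j x) \<le> C * indicator S x" for j
    using bnd by (intro AE_I2) (auto simp: indicator_def)
qed simp_all

text \<open>A real integrable function all of whose tail integrals \<open>\<integral>\<^sub>x\<^sup>\<infinity>\<close> vanish is zero almost
  everywhere: its positive and negative parts are densities of measures that agree on all
  rays \<open>(x,\<infinity>)\<close>, hence coincide.\<close>

lemma tail_integrals_zero_AE:
  fixes g :: "real \<Rightarrow> real"
  assumes g: "integrable lborel g"
    and tails: "\<And>x. (\<integral>y. g y * indicator {x<..} y \<partial>lborel) = 0"
  shows "AE y in lborel. g y = 0"
proof -
  have [measurable]: "g \<in> borel_measurable borel" using g by auto
  define gp where "gp y = max 0 (g y)" for y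
  define gn where "gn y = max 0 (- g y)" for y
  have [measurable]: "gp \<in> borel_measurable borel" "gn \<in> borel_measurable borel"
    unfolding gp_def gn_def by measurable
  have parts_integrable:
    "integrable lborel (\<lambda>y. gp y * indicator A y)" "integrable lborel (\<lambda>y. gn y * indicator A y)"
    if "A \<in> sets borel" for A
  proof -
    have "integrable lborel (\<lambda>y. indicator A y *\<^sub>R g y)"
      using that g by (intro integrable_mult_indicator) auto
    then have "integrable lborel (\<lambda>y. max 0 (indicator A y *\<^sub>R g y))"
      "integrable lborel (\<lambda>y. max 0 (- (indicator A y *\<^sub>R g y)))"
      by (auto intro: integrable_max)
    moreover have "(\<lambda>y. max 0 (indicator A y *\<^sub>R g y)) = (\<lambda>y. gp y * indicator A y)"
      "(\<lambda>y. max 0 (- (indicator A y *\<^sub>R g y))) = (\<lambda>y. gn y * indicator A y)"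
      by (auto simp: gp_def gn_def indicator_def fun_eq_iff)
    ultimately show "integrable lborel (\<lambda>y. gp y * indicator A y)"
      "integrable lborel (\<lambda>y. gn y * indicator A y)" by simp_all
  qed
  have density_eq: "emeasure (density lborel gp) A = ennreal (\<integral>y. gp y * indicator A y \<partial>lborel)"
    "emeasure (density lborel gn) A = ennreal (\<integral>y. gn y * indicator A y \<partial>lborel)"
    if A: "A \<in> sets borel" for A
  proof -
    have "emeasure (density lborel gp) A = (\<integral>\<^sup>+ y. ennreal (gp y * indicator A y) \<partial>lborel)"
      using A by (subst emeasure_density) (auto intro!: nn_integral_cong simp: indicator_def)
    also have "\<dots> = ennreal (\<integral>y. gp y * indicator A y \<partial>lborel)"
      using parts_integrable[OF A] by (intro nn_integral_eq_integral) (auto simp: gp_def)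
    finally show "emeasure (density lborel gp) A = ennreal (\<integral>y. gp y * indicator A y \<partial>lborel)" .
    have "emeasure (density lborel gn) A = (\<integral>\<^sup>+ y. ennreal (gn y * indicator A y) \<partial>lborel)"
      using A by (subst emeasure_density) (auto intro!: nn_integral_cong simp: indicator_def)
    also have "\<dots> = ennreal (\<integral>y. gn y * indicator A y \<partial>lborel)"
      using parts_integrable[OF A] by (intro nn_integral_eq_integral) (auto simp: gn_def)
    finally show "emeasure (density lborel gn) A = ennreal (\<integral>y. gn y * indicator A y \<partial>lborel)" .
  qed
  have "density lborel gp = density lborel gn"
  proof (rule measure_eqI_lessThan)
    fix x :: real
    have "(\<integral>y. gp y * indicator {x<..} y \<partial>lborel) - (\<integral>y. gn y * indicator {x<..} y \<partial>lborel)
        = (\<integral>y. gp y * indicator {x<..} y - gn y * indicator {x<..} y \<partial>lborel)"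
      using parts_integrable[of "{x<..}"] by simp
    also have "\<dots> = (\<integral>y. g y * indicator {x<..} y \<partial>lborel)"
      by (intro Bochner_Integration.integral_cong) (auto simp: gp_def gn_def indicator_def)
    finally have "(\<integral>y. gp y * indicator {x<..} y \<partial>lborel) - (\<integral>y. gn y * indicator {x<..} y \<partial>lborel)
        = (\<integral>y. g y * indicator {x<..} y \<partial>lborel)" .
    then show "emeasure (density lborel gp) {x<..} = emeasure (density lborel gn) {x<..}"
      using tails[of x] by (simp add: density_eq)
    show "emeasure (density lborel gp) {x<..} < \<infinity>" by (simp add: density_eq)
  qed auto
  then have "AE y in lborel. ennreal (gp y) = ennreal (gn y)"
    by (subst (asm) sigma_finite_measure.density_unique_iff[OF sigma_finite_lborel]) auto
  then show ?thesis
    by eventually_elim (auto simp: gp_def gn_def max_def split: if_splits)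
qed

lemma interval_integrals_zero_AE:
  fixes f :: "real \<Rightarrow> real"
  assumes f[measurable]: "f \<in> borel_measurable borel"
    and bnd: "\<And>x. x \<in> {0..T} \<Longrightarrow> \<bar>f x\<bar> \<le> C"
    and zero: "\<And>t. t \<in> {0..T} \<Longrightarrow> (LINT x:{0..t}|lborel. f x) = 0"
  shows "AE x in lborel. x \<in> {0..T} \<longrightarrow> f x = 0"
proof -
  define g where "g x = indicator {0..T} x * f x" for x
  have integrable_on: "set_integrable lborel A f" if "A \<subseteq> {0..T}" "A \<in> sets borel" for A
    using that bnd
    by (intro bounded_set_integrable[where C=C])
       (auto intro: emeasure_mono[THEN le_less_trans, of _ "{0..T}"] simp: emeasure_lborel_Icc_eq)
  have "integrable lborel g"
    using integrable_on[of "{0..T}"] by (simp add: g_def[abs_def] set_integrable_def)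
  moreover have "(\<integral>y. g y * indicator {x<..} y \<partial>lborel) = 0" for x
  proof -
    have tail: "(\<integral>y. g y * indicator {x<..} y \<partial>lborel) = (LINT y:{0..T} \<inter> {x<..}|lborel. f y)"
      unfolding set_lebesgue_integral_def
      by (intro Bochner_Integration.integral_cong) (auto simp: g_def indicator_def)
    consider "x < 0" | "T \<le> x" | "0 \<le> x" "x < T" by linarith
    then show ?thesis
    proof cases
      case 1
      then have "{0..T} \<inter> {x<..} = {0..T}" by auto
      then show ?thesis using tail zero[of T] by (cases "T \<ge> 0") (auto simp: set_lebesgue_integral_def)
    next
      case 2
      then have "{0..T} \<inter> {x<..} = {}" by auto
      then show ?thesis using tail by (simp add: set_lebesgue_integral_def)
    next
      case 3
      then have split: "{0..T} = {0..x} \<union> {x<..T}" and ray: "{0..T} \<inter> {x<..} = {x<..T}" by auto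
      have "(LINT y:{0..T}|lborel. f y) = (LINT y:{0..x}|lborel. f y) + (LINT y:{x<..T}|lborel. f y)"
        unfolding split using 3 by (intro set_integral_Un integrable_on) auto
      then show ?thesis using tail ray zero[of T] zero[of x] 3 by simp
    qed
  qed
  ultimately have "AE y in lborel. g y = 0" by (rule tail_integrals_zero_AE)
  then show ?thesis by eventually_elim (auto simp: g_def indicator_def)
qed

lemma set_integral_Re_Im:
  fixes h :: "real \<Rightarrow> complex"
  assumes "set_integrable lborel S h"
  shows "(LINT x:S|lborel. Re (h x)) = Re (LINT x:S|lborel. h x)"
    and "(LINT x:S|lborel. Im (h x)) = Im (LINT x:S|lborel. h x)"
  using integral_Re[of lborel "\<lambda>x. indicator S x *\<^sub>R h x"]
    integral_Im[of lborel "\<lambda>x. indicator S x *\<^sub>R h x"] assms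
  by (simp_all add: set_lebesgue_integral_def set_integrable_def)

lemma interval_integrals_zero_AE_complex:
  fixes h :: "real \<Rightarrow> complex"
  assumes h[measurable]: "h \<in> borel_measurable borel"
    and bnd: "\<And>x. x \<in> {0..T} \<Longrightarrow> norm (h x) \<le> C"
    and zero: "\<And>t. t \<in> {0..T} \<Longrightarrow> (LINT x:{0..t}|lborel. h x) = 0"
  shows "AE x in lborel. x \<in> {0..T} \<longrightarrow> h x = 0"
proof -
  have integrable_on: "set_integrable lborel {0..t} h" if "t \<in> {0..T}" for t
    using that bnd by (intro bounded_set_integrable[where C=C]) auto
  have "AE x in lborel. x \<in> {0..T} \<longrightarrow> Re (h x) = 0"
    using abs_Re_le_cmod[THEN order_trans] bnd zero
    by (intro interval_integrals_zero_AE[where C=C]) (auto simp: set_integral_Re_Im(1)[OF integrable_on])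
  moreover have "AE x in lborel. x \<in> {0..T} \<longrightarrow> Im (h x) = 0"
    using abs_Im_le_cmod[THEN order_trans] bnd zero
    by (intro interval_integrals_zero_AE[where C=C]) (auto simp: set_integral_Re_Im(2)[OF integrable_on])
  ultimately show ?thesis by eventually_elim (auto simp: complex_eq_iff)
qed

lemma set_integral_swap_square:
  fixes h :: "real \<Rightarrow> real \<Rightarrow> 'b::{banach, second_countable_topology}"
  assumes h[measurable]: "(\<lambda>(x,y). h x y) \<in> borel_measurable (lborel \<Otimes>\<^sub>M lborel)"
    and bnd: "\<And>x y. x \<in> {0..t} \<Longrightarrow> y \<in> {0..t} \<Longrightarrow> norm (h x y) \<le> C"
  shows "(LINT x:{0..t}|lborel. LINT y:{0..t}|lborel. h x y) =
         (LINT y:{0..t}|lborel. LINT x:{0..t}|lborel. h x y)"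
proof -
  define f where "f x y = indicator {0..t} x *\<^sub>R (indicator {0..t} y *\<^sub>R h x y)" for x y
  have bnd': "norm (h x y) \<le> \<bar>C\<bar>" if "x \<in> {0..t}" "y \<in> {0..t}" for x y
    using bnd[OF that] by linarith
  have int: "integrable (lborel \<Otimes>\<^sub>M lborel) (\<lambda>(x,y). f x y)"
  proof (rule Bochner_Integration.integrable_bound[where f="\<lambda>z. C * indicator ({0..t} \<times> {0..t}) z"])
    have "emeasure (lborel \<Otimes>\<^sub>M lborel) ({0..t} \<times> {0..t}) = emeasure lborel {0..t} * emeasure lborel {0..t}"
      by (rule sigma_finite_measure.emeasure_pair_measure_Times[OF sigma_finite_lborel]) auto
    also have "\<dots> < \<infinity>" by (simp add: emeasure_lborel_Icc_eq ennreal_mult_less_top)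
    finally show "integrable (lborel \<Otimes>\<^sub>M lborel) (\<lambda>z. C * indicator ({0..t} \<times> {0..t}) z)"
      by (intro integrable_mult_right integrable_real_indicator) auto
    show "(\<lambda>(x, y). f x y) \<in> borel_measurable (lborel \<Otimes>\<^sub>M lborel)"
      unfolding f_def by measurable
    show "AE z in lborel \<Otimes>\<^sub>M lborel. norm (case z of (x, y) \<Rightarrow> f x y) \<le> norm (C * indicator ({0..t} \<times> {0..t}) z)"
      using bnd' by (intro AE_I2) (auto simp: f_def indicator_def split: prod.splits)
  qed
  have "(LINT x:{0..t}|lborel. LINT y:{0..t}|lborel. h x y) = (\<integral>x. \<integral>y. f x y \<partial>lborel \<partial>lborel)"
    unfolding set_lebesgue_integral_def f_def
    by (intro Bochner_Integration.integral_cong refl integral_scaleR_right[symmetric])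
  also have "\<dots> = (\<integral>y. \<integral>x. f x y \<partial>lborel \<partial>lborel)"
    by (rule pair_sigma_finite.Fubini_integral[OF _ int, symmetric])
       (intro pair_sigma_finite.intro sigma_finite_lborel)
  also have "\<dots> = (LINT y:{0..t}|lborel. LINT x:{0..t}|lborel. h x y)"
    unfolding set_lebesgue_integral_def f_def
  proof (intro Bochner_Integration.integral_cong refl)
    fix y
    have "(\<integral>x. indicator {0..t} x *\<^sub>R (indicator {0..t} y *\<^sub>R h x y) \<partial>lborel) =
          (\<integral>x. indicator {0..t} y *\<^sub>R (indicator {0..t} x *\<^sub>R h x y) \<partial>lborel)"
      by (intro Bochner_Integration.integral_cong refl) (rule scaleR_left_commute)
    then show "(\<integral>x. indicator {0..t} x *\<^sub>R (indicator {0..t} y *\<^sub>R h x y) \<partial>lborel) =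
               indicator {0..t} y *\<^sub>R (\<integral>x. indicator {0..t} x *\<^sub>R h x y \<partial>lborel)"
      by (simp only: integral_scaleR_right)
  qed
  finally show ?thesis .
qed

lemma set_integral_translate:
  fixes f :: "real \<Rightarrow> 'b::{banach, second_countable_topology}"
  shows "(LINT r:{s..t}|lborel. f (r - s)) = (LINT w:{0..t-s}|lborel. f w)"
proof -
  have "(LINT w:{0..t-s}|lborel. f w) = (\<integral>w. indicator {0..t-s} w *\<^sub>R f w \<partial>lborel)"
    by (simp add: set_lebesgue_integral_def)
  also have "\<dots> = (\<integral>r. indicator {0..t-s} (-s + r) *\<^sub>R f (-s + r) \<partial>lborel)"
    using lborel_integral_real_affine[of 1 "\<lambda>w. indicator {0..t-s} w *\<^sub>R f w" "-s"] by simp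
  also have "\<dots> = (\<integral>r. indicator {s..t} r *\<^sub>R f (r - s) \<partial>lborel)"
    by (intro Bochner_Integration.integral_cong) (auto simp: indicator_def)
  finally show ?thesis by (simp add: set_lebesgue_integral_def)
qed

lemma integral_primitive_difference:
  fixes a A :: "real \<Rightarrow> complex"
  assumes a[measurable]: "a \<in> borel_measurable borel" and a_bound: "\<And>x. norm (a x) \<le> 1"
    and A: "\<And>s. 0 \<le> s \<Longrightarrow> A s = (LINT u:{0..s}|lborel. a u)" and t: "0 \<le> t"
  shows "(LINT u:{0..t}|lborel. A t - A u) = (LINT w:{0..t}|lborel. of_real w * a w)"
proof -
  define H where "H u w = (if u < w then a w else 0)" for u w :: real
  have integrable_on: "set_integrable lborel S a" if "S \<in> sets borel" "emeasure lborel S < \<infinity>" for S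
    using that a_bound by (intro bounded_set_integrable[where C=1]) auto
  have inner: "A t - A u = (LINT w:{0..t}|lborel. H u w)" if u: "u \<in> {0..t}" for u
  proof -
    have ut: "u \<le> t" and split: "{0..t} = {0..u} \<union> {u<..t}" using u by auto
    have "A t = (LINT w:{0..u}|lborel. a w) + (LINT w:{u<..t}|lborel. a w)"
      unfolding A[OF t] split
      by (intro set_integral_Un integrable_on) (auto simp: emeasure_lborel_Icc_eq emeasure_lborel_Ioc[OF ut])
    moreover have "(LINT w:{0..t}|lborel. H u w) = (LINT w:{u<..t}|lborel. a w)"
      unfolding set_lebesgue_integral_def
      by (intro Bochner_Integration.integral_cong) (use u in \<open>auto simp: H_def indicator_def\<close>)
    ultimately show ?thesis using u A by auto
  qed
  have "(LINT u:{0..t}|lborel. A t - A u) = (LINT u:{0..t}|lborel. LINT w:{0..t}|lborel. H u w)"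
    by (rule set_lebesgue_integral_cong) (auto simp: inner)
  also have "\<dots> = (LINT w:{0..t}|lborel. LINT u:{0..t}|lborel. H u w)"
    using a_bound by (intro set_integral_swap_square[where C=1]) (auto simp: H_def)
  also have "\<dots> = (LINT w:{0..t}|lborel. of_real w * a w)"
  proof (rule set_lebesgue_integral_cong, simp, intro allI impI)
    fix w assume w: "w \<in> {0..t}"
    have "(LINT u:{0..t}|lborel. H u w) = (LINT u:{0..<w}|lborel. a w)"
      unfolding set_lebesgue_integral_def
      by (intro Bochner_Integration.integral_cong) (use w in \<open>auto simp: H_def indicator_def\<close>)
    also have "\<dots> = measure lborel {0..<w} *\<^sub>R a w"
      by (rule set_integral_const) (use w in auto)
    finally show "(LINT u:{0..t}|lborel. H u w) = of_real w * a w"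
      using w by (simp add: scaleR_conv_of_real)
  qed
  finally show ?thesis .
qed

lemma integral_convolution_primitive:
  fixes a b B :: "real \<Rightarrow> complex"
  assumes a[measurable]: "a \<in> borel_measurable borel" and a_bound: "\<And>x. norm (a x) \<le> 1"
    and b[measurable]: "b \<in> borel_measurable borel" and b_bound: "\<And>x. norm (b x) \<le> 1"
    and B: "\<And>s. 0 \<le> s \<Longrightarrow> B s = (LINT u:{0..s}|lborel. b u)" and t: "0 \<le> t"
  shows "(LINT s:{0..t}|lborel. a s * B (t - s)) =
         (LINT r:{0..t}|lborel. LINT s:{0..r}|lborel. a s * b (r - s))"
proof -
  define K where "K r s = (if s \<le> r then a s * b (r - s) else 0)" for r s :: real
  have inner: "(LINT s:{0..r}|lborel. a s * b (r - s)) = (LINT s:{0..t}|lborel. K r s)"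
    if r: "r \<in> {0..t}" for r
    unfolding set_lebesgue_integral_def
    by (intro Bochner_Integration.integral_cong) (use r in \<open>auto simp: K_def indicator_def\<close>)
  have "(LINT r:{0..t}|lborel. LINT s:{0..r}|lborel. a s * b (r - s)) =
        (LINT r:{0..t}|lborel. LINT s:{0..t}|lborel. K r s)"
    by (rule set_lebesgue_integral_cong) (auto simp: inner)
  also have "\<dots> = (LINT s:{0..t}|lborel. LINT r:{0..t}|lborel. K r s)"
    using a_bound b_bound
    by (intro set_integral_swap_square[where C=1]) (auto simp: K_def norm_mult intro: mult_le_one)
  also have "\<dots> = (LINT s:{0..t}|lborel. a s * B (t - s))"
  proof (rule set_lebesgue_integral_cong, simp, intro allI impI)
    fix s assume s: "s \<in> {0..t}"
    have "(LINT r:{0..t}|lborel. K r s) = (LINT r:{s..t}|lborel. a s * b (r - s))"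
      unfolding set_lebesgue_integral_def
      by (intro Bochner_Integration.integral_cong) (use s in \<open>auto simp: K_def indicator_def\<close>)
    also have "\<dots> = a s * B (t - s)"
      using s B by (simp add: set_integral_translate)
    finally show "(LINT r:{0..t}|lborel. K r s) = a s * B (t - s)" .
  qed
  finally show ?thesis by simp
qed

text \<open>Pointwise convergence on \<open>[0,T]\<close> of functions that are 1-Lipschitz up to an error
  \<open>e\<^sub>j \<rightarrow> 0\<close>, towards a 1-Lipschitz limit, is uniform (compare on a finite
  \<open>\<delta>\<close>-grid and interpolate).\<close>

lemma pointwise_to_uniform_convergence:
  fixes F :: "nat \<Rightarrow> real \<Rightarrow> 'b::real_normed_vector" and G :: "real \<Rightarrow> 'b" and e :: "nat \<Rightarrow> real"
  assumes lim: "\<And>s. s \<in> {0..T} \<Longrightarrow> (\<lambda>j. F j s) \<longlonglongrightarrow> G s"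
    and F_lip: "\<And>j r s. r \<in> {0..T} \<Longrightarrow> s \<in> {0..T} \<Longrightarrow> norm (F j s - F j r) \<le> \<bar>s - r\<bar> + e j"
    and e: "e \<longlonglongrightarrow> 0"
    and G_lip: "\<And>r s. r \<in> {0..T} \<Longrightarrow> s \<in> {0..T} \<Longrightarrow> norm (G s - G r) \<le> \<bar>s - r\<bar>"
    and eps: "\<epsilon> > 0"
  shows "eventually (\<lambda>j. \<forall>s\<in>{0..T}. norm (F j s - G s) \<le> \<epsilon>) sequentially"
proof -
  define \<delta> where "\<delta> = \<epsilon> / 5"
  have d: "\<delta> > 0" using eps by (simp add: \<delta>_def)
  define N where "N = nat \<lceil>T / \<delta>\<rceil>"
  define K where "K = {k::nat. k \<le> N \<and> real k * \<delta> \<le> T}"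
  have grid: "eventually (\<lambda>j. \<forall>k\<in>K. dist (F j (real k * \<delta>)) (G (real k * \<delta>)) < \<delta>) sequentially"
    using d by (intro eventually_ball_finite ballI tendstoD[OF lim d]) (auto simp: K_def)
  have "eventually (\<lambda>j. dist (e j) 0 < \<delta>) sequentially" by (rule tendstoD[OF e d])
  with grid show ?thesis
  proof eventually_elim
    case (elim j)
    show ?case
    proof
      fix s assume s: "s \<in> {0..T}"
      define k where "k = nat \<lfloor>s / \<delta>\<rfloor>"
      have fl: "real k = of_int \<lfloor>s / \<delta>\<rfloor>" using s d by (simp add: k_def)
      have ks: "real k * \<delta> \<le> s" using fl floor_divide_lower[OF d, of s] by simp
      have sk: "s - real k * \<delta> < \<delta>"
        using fl floor_divide_upper[OF d, of s] by (simp add: algebra_simps)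
      have "real k \<le> T / \<delta>" using ks s d by (simp add: field_simps)
      then have "k \<le> N" unfolding N_def by linarith
      then have kK: "k \<in> K" using ks s by (auto simp: K_def)
      define g where "g = real k * \<delta>"
      have g: "g \<in> {0..T}" using kK d by (auto simp: K_def g_def)
      have "norm (F j s - G s) \<le> norm (F j s - F j g) + norm (F j g - G g) + norm (G g - G s)"
        by (rule norm_diff_triangle_le[OF norm_diff_triangle_le[OF order.refl order.refl] order.refl])
      also have "\<dots> < (\<bar>s - g\<bar> + e j) + \<delta> + \<bar>g - s\<bar>"
      proof -
        have "norm (F j g - G g) < \<delta>" using elim(1) kK by (auto simp: dist_norm g_def)
        then show ?thesis using F_lip[OF g s, of j] G_lip[OF s g] by linarith
      qed
      also have "\<dots> \<le> \<epsilon>"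
      proof -
        have "\<bar>s - g\<bar> < \<delta>" "\<bar>g - s\<bar> < \<delta>" "e j < \<delta>" using ks sk elim(2) by (auto simp: g_def dist_norm)
        then show ?thesis unfolding \<delta>_def by linarith
      qed
      finally show "norm (F j s - G s) \<le> \<epsilon>" by simp
    qed
  qed
qed


lemma less_powr_iff_log_ratio:
  fixes b x u :: real
  assumes "1 < b" "0 < x"
  shows "x < b powr u \<longleftrightarrow> ln x / ln b < u"
proof -
  have "x < b powr u \<longleftrightarrow> ln x < u * ln b"
    using assms by (subst ln_less_cancel_iff[symmetric]) (auto simp: ln_powr)
  also have "\<dots> \<longleftrightarrow> ln x / ln b < u"
    using assms by (simp add: pos_divide_less_eq)
  finally show ?thesis .
qed

lemma powr_minus_log_ratio:
  assumes q: "q \<ge> 2" and d: "d \<ge> 1"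
  shows "real q powr (t - ln (real d) / ln (real q)) = real q powr t / real d"
proof -
  have "real q powr (ln (real d) / ln (real q)) = exp (ln (real d) / ln (real q) * ln (real q))"
    using q by (simp add: powr_def)
  also have "\<dots> = real d" using q d by simp
  finally show ?thesis by (simp add: powr_diff)
qed

lemma inverse_ln_le_2:
  assumes "q \<ge> 2"
  shows "1 / ln (real q) \<le> 2"
proof -
  have "2/3 \<le> ln (2::real)" by (rule ln2_ge_two_thirds)
  also have "\<dots> \<le> ln (real q)" using assms by simp
  finally show ?thesis by (simp add: field_simps)
qed

definition beta :: "nat \<Rightarrow> (nat \<Rightarrow> complex) \<Rightarrow> nat \<Rightarrow> complex" where
  "beta q chi d = chi d * of_real (Defs.mangoldt d) / (of_nat d * of_real (ln (real q)))"

definition charL :: "nat \<Rightarrow> (nat \<Rightarrow> complex) \<Rightarrow> real \<Rightarrow> complex" where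
  "charL q chi t = (\<Sum>n\<in>nats_below (real q powr t). chi n * of_real (ln (real n)) / of_nat n) /
                   of_real ((ln (real q))\<^sup>2)"

lemma charB_eq_sum_beta: "charB q chi t = (\<Sum>d\<in>nats_below (real q powr t). beta q chi d)"
  unfolding charB_def beta_def by (simp add: sum_divide_distrib divide_divide_eq_left)

lemma charL_eq_shifted_sum:
  assumes q: "q \<ge> 2" and mult: "\<And>m n. chi (m*n) = chi m * chi n"
  shows "charL q chi t =
         (\<Sum>d\<in>nats_below (real q powr t). beta q chi d * charA q chi (t - ln (real d) / ln (real q)))"
proof -
  define L where "L = ln (real q)"
  have L: "L > 0" using q by (simp add: L_def)
  have "(\<Sum>n\<in>nats_below (real q powr t). chi n * of_real (ln (real n)) / of_nat n)
    = (\<Sum>d\<in>nats_below (real q powr t). chi d * of_real (Defs.mangoldt d) / of_nat d *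
              (\<Sum>m\<in>nats_below (real q powr t / real d). chi m / of_nat m))"
    by (rule sum_log_convolution[OF mult])
  also have "\<dots> = (\<Sum>d\<in>nats_below (real q powr t).
      of_real L * of_real L * (beta q chi d * charA q chi (t - ln (real d) / ln (real q))))"
  proof (intro sum.cong refl)
    fix d assume "d \<in> nats_below (real q powr t)"
    then have d: "d \<ge> 1" by simp
    have "charA q chi (t - ln (real d) / ln (real q)) =
          (\<Sum>m\<in>nats_below (real q powr t / real d). chi m / of_nat m) / of_real L"
      unfolding charA_def powr_minus_log_ratio[OF q d] L_def ..
    then show "chi d * of_real (Defs.mangoldt d) / of_nat d *
        (\<Sum>m\<in>nats_below (real q powr t / real d). chi m / of_nat m)
       = of_real L * of_real L * (beta q chi d * charA q chi (t - ln (real d) / ln (real q)))"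
      using L by (simp add: beta_def L_def[symmetric] field_simps)
  qed
  finally show ?thesis
    using L by (simp add: charL_def sum_distrib_left[symmetric] L_def[symmetric] power2_eq_square)
qed

text \<open>Estimates for the normalised sums, assuming \<open>|\<chi>| \<le> 1\<close>.  \<open>charA\<close> is 1-Lipschitz up to an
  error \<open>1/log q\<close> (harmonic sums over \<open>[q\<^sup>r, q\<^sup>s)\<close>), and \<open>\<Sum> |\<beta>(d)| = O(t)\<close> by the Chebyshev bound.\<close>

lemma charA_increment_bound:
  assumes q: "q \<ge> 2" and chi: "\<And>n. norm (chi n) \<le> 1" and r: "0 \<le> r" and rs: "r \<le> s"
  shows "norm (charA q chi s - charA q chi r) \<le> (s - r) + 1 / ln (real q)"
proof -
  define L where "L = ln (real q)"
  have L: "L > 0" using q by (simp add: L_def)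
  have q1: "real q powr r \<ge> 1" "real q powr s \<ge> 1" using q r rs by (intro ge_one_powr_ge_zero; simp)+
  define Sr where "Sr = nats_below (real q powr r)"
  define Ss where "Ss = nats_below (real q powr s)"
  have "real q powr r \<le> real q powr s" using q rs by (intro powr_mono) auto
  then have sub: "Sr \<subseteq> Ss" unfolding Sr_def Ss_def by auto
  have fin: "finite Ss" unfolding Ss_def by (rule finite_nats_below)
  have "charA q chi s - charA q chi r = (\<Sum>n\<in>Ss - Sr. chi n / of_nat n) / L"
    using sum_diff[OF fin sub, of "\<lambda>n. chi n / of_nat n"]
    by (simp add: charA_def Ss_def Sr_def L_def diff_divide_distrib)
  moreover have "norm (\<Sum>n\<in>Ss - Sr. chi n / of_nat n) \<le> (\<Sum>n\<in>Ss - Sr. 1 / real n)"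
    by (rule order_trans[OF norm_sum sum_mono]) (auto simp: norm_divide intro: divide_right_mono chi)
  moreover have "(\<Sum>n\<in>Ss - Sr. 1 / real n) = harm_below (real q powr s) - harm_below (real q powr r)"
    using sum_diff[OF fin sub, of "\<lambda>n. 1 / real n"] by (simp add: harm_below_def Ss_def Sr_def)
  moreover have "\<dots> \<le> 1 + (s - r) * L"
    using harm_below_le[OF q1(2)] ln_le_harm_below[of "real q powr r"] q1 q
    by (simp add: ln_powr L_def algebra_simps)
  ultimately have "norm (charA q chi s - charA q chi r) \<le> (1 + (s - r) * L) / L"
    using L by (simp add: norm_divide divide_right_mono)
  then show ?thesis using L by (simp add: L_def add_divide_distrib)
qed

lemma charA_zero:
  assumes "q \<ge> 2"
  shows "charA q chi 0 = 0"
proof -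
  have "nats_below (real q powr 0) = {}" using assms by auto
  then show ?thesis by (simp add: charA_def)
qed

lemma charA_bound:
  assumes q: "q \<ge> 2" and chi: "\<And>n. norm (chi n) \<le> 1" and u: "0 \<le> u"
  shows "norm (charA q chi u) \<le> u + 1 / ln (real q)"
  using charA_increment_bound[OF q chi order.refl u] by (simp add: charA_zero[OF q])

lemma beta_norm_sum_bound:
  assumes q: "q \<ge> 2" and chi: "\<And>n. norm (chi n) \<le> 1" and t: "0 \<le> t"
  shows "(\<Sum>d\<in>nats_below (real q powr t). norm (beta q chi d)) \<le> 4 * t + 2 / ln (real q)"
proof -
  define L where "L = ln (real q)"
  have L: "L > 0" using q by (simp add: L_def)
  have "(\<Sum>d\<in>nats_below (real q powr t). norm (beta q chi d))
      \<le> (\<Sum>d\<in>nats_below (real q powr t). Defs.mangoldt d / real d) / L"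
    unfolding sum_divide_distrib
  proof (rule sum_mono)
    fix d
    have "norm (beta q chi d) = norm (chi d) * (Defs.mangoldt d / real d / L)"
      using L mangoldt_nonneg_Defs[of d] by (simp add: beta_def norm_divide norm_mult L_def)
    also have "\<dots> \<le> Defs.mangoldt d / real d / L"
      using L mangoldt_nonneg_Defs[of d] chi[of d] by (intro mult_left_le_one_le) auto
    finally show "norm (beta q chi d) \<le> Defs.mangoldt d / real d / L" .
  qed
  also have "\<dots> \<le> (2 + 4 * ln (real q powr t)) / L"
    using L q t by (intro divide_right_mono mangoldt_harmonic_bound ge_one_powr_ge_zero) auto
  also have "\<dots> = 4 * t + 2 / L" using q L by (simp add: ln_powr L_def field_simps)
  finally show ?thesis by (simp add: L_def)
qed

lemma charB_bound:
  assumes q: "q \<ge> 2" and chi: "\<And>n. norm (chi n) \<le> 1" and t: "0 \<le> t"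
  shows "norm (charB q chi t) \<le> 4 * t + 2 / ln (real q)"
  unfolding charB_eq_sum_beta by (rule order_trans[OF norm_sum beta_norm_sum_bound[OF q chi t]])

text \<open>On \<open>(-\<infinity>, T]\<close>, \<open>charA\<close> and \<open>charB\<close> are finite linear combinations of indicators of rays
  \<open>(log n / log q, \<infinity>)\<close>, \<open>n < q\<^sup>T\<close>; these step functions are what Abel summation integrates.\<close>

definition stepA :: "nat \<Rightarrow> (nat \<Rightarrow> complex) \<Rightarrow> real \<Rightarrow> real \<Rightarrow> complex" where
  "stepA q chi T u = (\<Sum>n\<in>nats_below (real q powr T).
      chi n / (of_nat n * of_real (ln (real q))) * indicator {v. ln (real n) / ln (real q) < v} u)"

definition stepB :: "nat \<Rightarrow> (nat \<Rightarrow> complex) \<Rightarrow> real \<Rightarrow> real \<Rightarrow> complex" where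
  "stepB q chi T u = (\<Sum>n\<in>nats_below (real q powr T).
      beta q chi n * indicator {v. ln (real n) / ln (real q) < v} u)"

lemma stepA_measurable[measurable]: "stepA q chi T \<in> borel_measurable borel"
  unfolding stepA_def by measurable

lemma stepB_measurable[measurable]: "stepB q chi T \<in> borel_measurable borel"
  unfolding stepB_def by measurable

lemma sum_over_rays:
  fixes c :: "nat \<Rightarrow> complex"
  assumes q: "q \<ge> 2" and uT: "u \<le> T"
  shows "(\<Sum>n\<in>nats_below (real q powr T). c n * indicator {v. ln (real n) / ln (real q) < v} u) =
         (\<Sum>n\<in>nats_below (real q powr u). c n)"
proof -
  have q1: "real q > 1" using q by simp
  have "real q powr u \<le> real q powr T" using q1 uT by (intro powr_mono) auto
  then have restrict: "nats_below (real q powr T) \<inter> {n. ln (real n) / ln (real q) < u} =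
                      nats_below (real q powr u)"
    using less_powr_iff_log_ratio[OF q1] by (auto intro: less_le_trans)
  have "(\<Sum>n\<in>nats_below (real q powr T). c n * indicator {v. ln (real n) / ln (real q) < v} u) =
        (\<Sum>n\<in>nats_below (real q powr T). if n \<in> {n. ln (real n) / ln (real q) < u} then c n else 0)"
    by (intro sum.cong refl) (auto simp: indicator_def)
  also have "\<dots> = (\<Sum>n\<in>nats_below (real q powr T) \<inter> {n. ln (real n) / ln (real q) < u}. c n)"
    by (rule sum.inter_restrict[symmetric]) (rule finite_nats_below)
  finally show ?thesis by (simp only: restrict)
qed

lemma charA_eq_stepA:
  assumes "q \<ge> 2" "u \<le> T"
  shows "charA q chi u = stepA q chi T u"
  unfolding stepA_def sum_over_rays[OF assms] charA_def
  by (simp add: sum_divide_distrib divide_divide_eq_left)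

lemma charB_eq_stepB:
  assumes "q \<ge> 2" "u \<le> T"
  shows "charB q chi u = stepB q chi T u"
  unfolding stepB_def sum_over_rays[OF assms] charB_eq_sum_beta ..

text \<open>Abel summation, left side: \<open>charL(t) = \<integral>\<^sub>0\<^sup>t (A(t) - A(u)) du\<close>, each term
  \<open>\<chi>(n)/(n log q)\<close> contributing over \<open>u \<in> [0, log n / log q]\<close>.\<close>

lemma charL_eq_integral:
  assumes q: "q \<ge> 2" and t: "0 \<le> t"
  shows "charL q chi t = (LINT u:{0..t}|lborel. stepA q chi t t - stepA q chi t u)"
proof -
  define L where "L = ln (real q)"
  have L: "L > 0" using q by (simp add: L_def)
  have q1: "real q > 1" using q by simp
  define S where "S = nats_below (real q powr t)"
  define c where "c n = chi n / (of_nat n * of_real L)" for n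
  define v where "v n = ln (real n) / L" for n
  have vS: "0 \<le> v n" "v n < t" if "n \<in> S" for n
    using that less_powr_iff_log_ratio[OF q1, of "real n" t] L by (auto simp: S_def v_def L_def)
  have pointwise: "indicator {0..t} u *\<^sub>R (stepA q chi t t - stepA q chi t u) =
                   (\<Sum>n\<in>S. indicator {0..v n} u *\<^sub>R c n)" for u
    unfolding stepA_def S_def[symmetric] c_def[symmetric] L_def[symmetric] v_def[symmetric]
      sum_subtractf[symmetric] scaleR_sum_right
  proof (intro sum.cong refl)
    fix n assume n: "n \<in> S"
    show "indicator {0..t} u *\<^sub>R (c n * indicator {w. v n < w} t - c n * indicator {w. v n < w} u) =
          indicator {0..v n} u *\<^sub>R c n"
      using vS[OF n] by (cases "0 \<le> u"; cases "u \<le> t"; cases "u \<le> v n") (auto simp: indicator_def)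
  qed
  have "(LINT u:{0..t}|lborel. stepA q chi t t - stepA q chi t u) =
        (\<Sum>n\<in>S. \<integral>u. indicator {0..v n} u *\<^sub>R c n \<partial>lborel)"
    unfolding set_lebesgue_integral_def pointwise
    by (rule Bochner_Integration.integral_sum)
       (auto intro!: integrable_scaleR_left integrable_real_indicator simp: emeasure_lborel_Icc_eq)
  also have "\<dots> = (\<Sum>n\<in>S. of_real (v n) * c n)"
    using vS by (intro sum.cong refl)
       (simp add: set_lebesgue_integral_def[symmetric] set_integral_const emeasure_lborel_Icc_eq scaleR_conv_of_real)
  also have "\<dots> = charL q chi t"
    using L by (simp add: charL_def S_def c_def v_def L_def sum_divide_distrib field_simps power2_eq_square)
  finally show ?thesis ..
qed

lemma shifted_sum_eq_integral:
  assumes q: "q \<ge> 2" and t: "0 \<le> t" and a[measurable]: "a \<in> borel_measurable borel"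
    and a_bound: "\<And>x. norm (a x) \<le> 1" and A: "\<And>s. 0 \<le> s \<Longrightarrow> A s = (LINT u:{0..s}|lborel. a u)"
  shows "(\<Sum>d\<in>nats_below (real q powr t). beta q chi d * A (t - ln (real d) / ln (real q)))
       = (LINT s:{0..t}|lborel. a s * stepB q chi t (t - s))"
proof -
  define L where "L = ln (real q)"
  have L: "L > 0" using q by (simp add: L_def)
  have q1: "real q > 1" using q by simp
  define S where "S = nats_below (real q powr t)"
  define v where "v n = ln (real n) / L" for n
  have vS: "0 \<le> v n" "v n < t" if "n \<in> S" for n
    using that less_powr_iff_log_ratio[OF q1, of "real n" t] L by (auto simp: S_def v_def L_def)
  have pointwise: "indicator {0..t} s *\<^sub>R (a s * stepB q chi t (t - s)) =
                   (\<Sum>d\<in>S. beta q chi d * (indicator {0..<t - v d} s *\<^sub>R a s))" for s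
    unfolding stepB_def S_def[symmetric] L_def[symmetric] v_def[symmetric] scaleR_sum_right sum_distrib_left
  proof (intro sum.cong refl)
    fix d assume d: "d \<in> S"
    show "indicator {0..t} s *\<^sub>R (a s * (beta q chi d * indicator {w. v d < w} (t - s))) =
          beta q chi d * (indicator {0..<t - v d} s *\<^sub>R a s)"
      using vS[OF d] by (cases "0 \<le> s"; cases "s \<le> t"; cases "v d < t - s") (auto simp: indicator_def)
  qed
  have integrable_on: "set_integrable lborel {0..<c} a" for c
    using a_bound by (intro bounded_set_integrable[where C=1]) (auto, cases "0 \<le> c", auto)
  have initial_segment: "(LINT s:{0..<c}|lborel. a s) = A c" if "0 \<le> c" for c
  proof -
    have "(LINT s:{0..<c}|lborel. a s) = (LINT s:{0..c}|lborel. a s)"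
      using AE_lborel_singleton[of c]
      by (intro set_integral_cong_set) (auto simp: set_borel_measurable_def elim!: eventually_mono)
    then show ?thesis using A[OF that] by simp
  qed
  have "(LINT s:{0..t}|lborel. a s * stepB q chi t (t - s)) =
        (\<Sum>d\<in>S. \<integral>s. beta q chi d * (indicator {0..<t - v d} s *\<^sub>R a s) \<partial>lborel)"
    unfolding set_lebesgue_integral_def pointwise
    using integrable_on by (intro Bochner_Integration.integral_sum integrable_mult_right)
       (simp add: set_integrable_def)
  also have "\<dots> = (\<Sum>d\<in>S. beta q chi d * A (t - v d))"
  proof (intro sum.cong refl)
    fix d assume "d \<in> S"
    then have "0 \<le> t - v d" using vS by fastforce
    then show "(\<integral>s. beta q chi d * (indicator {0..<t - v d} s *\<^sub>R a s) \<partial>lborel) = beta q chi d * A (t - v d)"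
      by (simp add: set_lebesgue_integral_def[symmetric] initial_segment)
  qed
  finally show ?thesis by (simp add: S_def v_def L_def)
qed

locale character_sequence =
  fixes q :: "nat \<Rightarrow> nat" and chi :: "nat \<Rightarrow> nat \<Rightarrow> complex"
  assumes q_ge_2: "\<And>j. q j \<ge> 2"
    and q_lim: "filterlim q at_top sequentially"
    and chi_norm: "\<And>j n. norm (chi j n) \<le> 1"
    and chi_mult: "\<And>j m n. chi j (m*n) = chi j m * chi j n"
begin

lemma inverse_ln_q_lim: "(\<lambda>j. 1 / ln (real (q j))) \<longlonglongrightarrow> 0"
proof -
  have "filterlim (\<lambda>j. ln (real (q j))) at_top sequentially"
    using filterlim_compose[OF filterlim_real_sequentially q_lim] by (rule filterlim_compose[OF ln_at_top])
  then show ?thesis by (simp add: divide_inverse tendsto_inverse_0_at_top)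
qed

lemma charL_limit:
  assumes A[measurable]: "A \<in> borel_measurable borel"
    and A_lim: "\<And>s. 0 \<le> s \<Longrightarrow> (\<lambda>j. charA (q j) (chi j) s) \<longlonglongrightarrow> A s" and t: "0 \<le> t"
  shows "(\<lambda>j. charL (q j) (chi j) t) \<longlonglongrightarrow> (LINT u:{0..t}|lborel. A t - A u)"
proof -
  have step: "stepA (q j) (chi j) t t - stepA (q j) (chi j) t u = charA (q j) (chi j) t - charA (q j) (chi j) u"
    if "u \<le> t" for j u
    using charA_eq_stepA[OF q_ge_2[of j], where u=t and T=t and chi="chi j"]
      charA_eq_stepA[OF q_ge_2[of j], where u=u and T=t and chi="chi j"] that by simp
  have "(\<lambda>j. LINT u:{0..t}|lborel. stepA (q j) (chi j) t t - stepA (q j) (chi j) t u)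
        \<longlonglongrightarrow> (LINT u:{0..t}|lborel. A t - A u)"
  proof (rule set_integral_bounded_convergence[where C="2 * t + 4"])
    show "norm (stepA (q j) (chi j) t t - stepA (q j) (chi j) t u) \<le> 2 * t + 4"
      if u: "u \<in> {0..t}" for j u
    proof -
      have "norm (charA (q j) (chi j) t) \<le> t + 2" "norm (charA (q j) (chi j) u) \<le> u + 2"
        using charA_bound[where q="q j" and chi="chi j", OF q_ge_2 chi_norm, of t] charA_bound[where q="q j" and chi="chi j", OF q_ge_2 chi_norm, of u]
          inverse_ln_le_2[OF q_ge_2, of j] u t by auto
      then show ?thesis using step u by (auto intro: norm_triangle_le_diff)
    qed
    show "(\<lambda>j. stepA (q j) (chi j) t t - stepA (q j) (chi j) t u) \<longlonglongrightarrow> A t - A u"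
      if u: "u \<in> {0..t}" for u
      using step u t by (simp add: tendsto_diff A_lim)
  qed (auto simp: emeasure_lborel_Icc_eq)
  then show ?thesis using charL_eq_integral[OF q_ge_2 t] by simp
qed

text \<open>Step (3): replacing \<open>A\<^sub>j\<close> by \<open>A\<close> in \<open>\<Sum> \<beta>(d) A\<^sub>j(t - v(d))\<close> costs \<open>o(1)\<close>, since
  \<open>A\<^sub>j \<rightarrow> A\<close> uniformly on \<open>[0,t]\<close> and \<open>\<Sum> |\<beta>(d)| \<le> 4t + 4\<close>.\<close>

lemma shifted_sum_gap:
  assumes A_lim: "\<And>s. 0 \<le> s \<Longrightarrow> (\<lambda>j. charA (q j) (chi j) s) \<longlonglongrightarrow> A s"
    and A_lip: "\<And>r s. 0 \<le> r \<Longrightarrow> 0 \<le> s \<Longrightarrow> norm (A s - A r) \<le> \<bar>s - r\<bar>" and t: "0 \<le> t"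
  shows "(\<lambda>j. (\<Sum>d\<in>nats_below (real (q j) powr t). beta (q j) (chi j) d * charA (q j) (chi j) (t - ln (real d) / ln (real (q j)))) -
              (\<Sum>d\<in>nats_below (real (q j) powr t). beta (q j) (chi j) d * A (t - ln (real d) / ln (real (q j)))))
         \<longlonglongrightarrow> 0"
proof (rule tendstoI)
  fix \<epsilon> :: real assume eps: "\<epsilon> > 0"
  define \<epsilon>' where "\<epsilon>' = \<epsilon> / (2 * (4 * t + 4))"
  have eps': "\<epsilon>' > 0" using eps t by (simp add: \<epsilon>'_def)
  have "eventually (\<lambda>j. \<forall>s\<in>{0..t}. norm (charA (q j) (chi j) s - A s) \<le> \<epsilon>') sequentially"
  proof (rule pointwise_to_uniform_convergence[OF _ _ inverse_ln_q_lim _ eps'])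
    show "norm (charA (q j) (chi j) s - charA (q j) (chi j) r) \<le> \<bar>s - r\<bar> + 1 / ln (real (q j))"
      if "r \<in> {0..t}" "s \<in> {0..t}" for j r s
      using that charA_increment_bound[where q="q j" and chi="chi j", OF q_ge_2 chi_norm, of r s]
        charA_increment_bound[where q="q j" and chi="chi j", OF q_ge_2 chi_norm, of s r]
      by (cases "r \<le> s") (auto simp: norm_minus_commute)
  qed (use A_lim A_lip in auto)
  then show "eventually (\<lambda>j. dist ((\<Sum>d\<in>nats_below (real (q j) powr t). beta (q j) (chi j) d * charA (q j) (chi j) (t - ln (real d) / ln (real (q j)))) -
              (\<Sum>d\<in>nats_below (real (q j) powr t). beta (q j) (chi j) d * A (t - ln (real d) / ln (real (q j))))) 0 < \<epsilon>) sequentially"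
  proof eventually_elim
    case (elim j)
    define S where "S = nats_below (real (q j) powr t)"
    define v where "v d = ln (real d) / ln (real (q j))" for d
    have q1: "real (q j) > 1" using q_ge_2[of j] by simp
    have close: "norm (charA (q j) (chi j) (t - v d) - A (t - v d)) \<le> \<epsilon>'" if "d \<in> S" for d
    proof -
      have "0 \<le> v d" "v d < t"
        using that q1 less_powr_iff_log_ratio[OF q1, of "real d" t] by (auto simp: v_def S_def)
      then show ?thesis using elim by auto
    qed
    have "norm (\<Sum>d\<in>S. beta (q j) (chi j) d * (charA (q j) (chi j) (t - v d) - A (t - v d)))
          \<le> (\<Sum>d\<in>S. norm (beta (q j) (chi j) d) * \<epsilon>')"
      using close by (intro order_trans[OF norm_sum] sum_mono) (simp add: norm_mult mult_left_mono)
    also have "\<dots> \<le> (4 * t + 4) * \<epsilon>'"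
      using eps' beta_norm_sum_bound[where q="q j" and chi="chi j", OF q_ge_2 chi_norm t] inverse_ln_le_2[OF q_ge_2, of j]
      by (simp add: S_def sum_distrib_right[symmetric] mult_right_mono)
    also have "\<dots> = \<epsilon> / 2" using t by (simp add: \<epsilon>'_def field_simps)
    also have "\<dots> < \<epsilon>" using eps by simp
    finally show ?case
      by (simp add: S_def v_def dist_norm sum_subtractf right_diff_distrib)
  qed
qed

lemma shifted_sum_limit:
  assumes a[measurable]: "a \<in> borel_measurable borel" and a_bound: "\<And>x. norm (a x) \<le> 1"
    and A: "\<And>s. 0 \<le> s \<Longrightarrow> A s = (LINT u:{0..s}|lborel. a u)"
    and B[measurable]: "B \<in> borel_measurable borel"
    and B_lim: "\<And>s. 0 \<le> s \<Longrightarrow> (\<lambda>j. charB (q j) (chi j) s) \<longlonglongrightarrow> B s" and t: "0 \<le> t"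
  shows "(\<lambda>j. \<Sum>d\<in>nats_below (real (q j) powr t). beta (q j) (chi j) d * A (t - ln (real d) / ln (real (q j))))
         \<longlonglongrightarrow> (LINT s:{0..t}|lborel. a s * B (t - s))"
proof -
  have step: "stepB (q j) (chi j) t (t - s) = charB (q j) (chi j) (t - s)" if "0 \<le> s" for j s
    using charB_eq_stepB[OF q_ge_2[of j], where u="t - s" and T=t and chi="chi j"] that by simp
  have "(\<lambda>j. LINT s:{0..t}|lborel. a s * stepB (q j) (chi j) t (t - s))
        \<longlonglongrightarrow> (LINT s:{0..t}|lborel. a s * B (t - s))"
  proof (rule set_integral_bounded_convergence[where C="4 * t + 4"])
    show "norm (a s * stepB (q j) (chi j) t (t - s)) \<le> 4 * t + 4" if s: "s \<in> {0..t}" for j s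
    proof -
      have "norm (charB (q j) (chi j) (t - s)) \<le> 4 * t + 4"
        using charB_bound[where q="q j" and chi="chi j", OF q_ge_2 chi_norm, of "t - s"] inverse_ln_le_2[OF q_ge_2, of j] s by auto
      then have "norm (a s) * norm (charB (q j) (chi j) (t - s)) \<le> 1 * (4 * t + 4)"
        using a_bound[of s] by (intro mult_mono) auto
      then show ?thesis using s step by (simp add: norm_mult)
    qed
    show "(\<lambda>j. a s * stepB (q j) (chi j) t (t - s)) \<longlonglongrightarrow> a s * B (t - s)" if s: "s \<in> {0..t}" for s
      using s step by (simp add: tendsto_mult_left B_lim)
  qed (auto simp: emeasure_lborel_Icc_eq)
  then show ?thesis using shifted_sum_eq_integral[OF q_ge_2 t a a_bound A] by simp
qed

lemma limit_identity:
  assumes a[measurable]: "a \<in> borel_measurable borel" and a_bound: "\<And>x. norm (a x) \<le> 1"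
    and A: "\<And>s. 0 \<le> s \<Longrightarrow> A s = (LINT u:{0..s}|lborel. a u)"
    and A_meas[measurable]: "A \<in> borel_measurable borel"
    and A_lip: "\<And>r s. 0 \<le> r \<Longrightarrow> 0 \<le> s \<Longrightarrow> norm (A s - A r) \<le> \<bar>s - r\<bar>"
    and A_lim: "\<And>s. 0 \<le> s \<Longrightarrow> (\<lambda>j. charA (q j) (chi j) s) \<longlonglongrightarrow> A s"
    and B[measurable]: "B \<in> borel_measurable borel"
    and B_lim: "\<And>s. 0 \<le> s \<Longrightarrow> (\<lambda>j. charB (q j) (chi j) s) \<longlonglongrightarrow> B s" and t: "0 \<le> t"
  shows "(LINT u:{0..t}|lborel. A t - A u) = (LINT s:{0..t}|lborel. a s * B (t - s))"
proof -
  define S where "S j = nats_below (real (q j) powr t)" for j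
  define v where "v j d = ln (real d) / ln (real (q j))" for j d
  define RA where "RA j = (\<Sum>d\<in>S j. beta (q j) (chi j) d * charA (q j) (chi j) (t - v j d))" for j
  define R where "R j = (\<Sum>d\<in>S j. beta (q j) (chi j) d * A (t - v j d))" for j
  have "charL (q j) (chi j) t = RA j" for j
    unfolding RA_def S_def v_def by (rule charL_eq_shifted_sum[where q="q j" and chi="chi j", OF q_ge_2 chi_mult])
  then have "RA \<longlonglongrightarrow> (LINT u:{0..t}|lborel. A t - A u)"
    using charL_limit[OF A_meas A_lim t] by simp
  moreover have "(\<lambda>j. RA j - R j) \<longlonglongrightarrow> 0"
    using shifted_sum_gap[OF A_lim A_lip t] by (simp add: RA_def R_def S_def v_def)
  ultimately have "(\<lambda>j. RA j - (RA j - R j)) \<longlonglongrightarrow> (LINT u:{0..t}|lborel. A t - A u) - 0"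
    by (rule tendsto_diff)
  moreover have "R \<longlonglongrightarrow> (LINT s:{0..t}|lborel. a s * B (t - s))"
    unfolding R_def[abs_def] S_def v_def by (rule shifted_sum_limit[OF a a_bound A B B_lim t])
  ultimately show ?thesis by (simp add: LIMSEQ_unique)
qed

end

lemma truncated_convolution_measurable:
  fixes a b :: "real \<Rightarrow> complex"
  assumes [measurable]: "a \<in> borel_measurable borel" "b \<in> borel_measurable borel"
  shows "(\<lambda>r. LINT s:{0..r}|lborel. a s * b (r - s)) \<in> borel_measurable borel"
proof -
  have "(\<lambda>(r, s). indicator {0..r} s *\<^sub>R (a s * b (r - s))) =
        (\<lambda>p. indicator {p::real \<times> real. 0 \<le> snd p \<and> snd p \<le> fst p} p *\<^sub>R (a (snd p) * b (fst p - snd p)))"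
    by (auto simp: fun_eq_iff indicator_def)
  also have "\<dots> \<in> borel_measurable (lborel \<Otimes>\<^sub>M lborel)" by measurable
  finally have "(\<lambda>r. \<integral>s. indicator {0..r} s *\<^sub>R (a s * b (r - s)) \<partial>lborel) \<in> borel_measurable lborel"
    by (rule sigma_finite_measure.borel_measurable_lebesgue_integral[OF sigma_finite_lborel])
  then show ?thesis by (simp add: set_lebesgue_integral_def)
qed

lemma truncated_convolution_bound:
  fixes a b :: "real \<Rightarrow> complex"
  assumes [measurable]: "a \<in> borel_measurable borel" "b \<in> borel_measurable borel"
    and "\<And>x. norm (a x) \<le> 1" "\<And>x. norm (b x) \<le> 1" and r: "0 \<le> r"
  shows "norm (LINT s:{0..r}|lborel. a s * b (r - s)) \<le> r"
proof -
  have "norm (LINT s:{0..r}|lborel. a s * b (r - s)) \<le> 1 * measure lborel {0..r}"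
    using assms(3,4) by (intro bounded_set_integral_norm) (auto simp: emeasure_lborel_Icc_eq norm_mult intro: mult_le_one)
  then show ?thesis using r by simp
qed

text \<open>From the limit identity \<open>\<integral>\<^sub>0\<^sup>t (A(t) - A(u)) du = \<integral>\<^sub>0\<^sup>t a(s) B(t-s) ds\<close> for all \<open>t \<ge> 0\<close> to the
  pointwise identity \<open>t a(t) = (a * b)(t)\<close> for almost every \<open>t > 0\<close>: both sides have the same
  integrals over every \<open>[0,t]\<close>.\<close>

lemma convolution_identity_AE:
  fixes a b A B :: "real \<Rightarrow> complex"
  assumes a[measurable]: "a \<in> borel_measurable borel" and a_bound: "\<And>x. norm (a x) \<le> 1"
    and b[measurable]: "b \<in> borel_measurable borel" and b_bound: "\<And>x. norm (b x) \<le> 1"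
    and A: "\<And>s. 0 \<le> s \<Longrightarrow> A s = (LINT u:{0..s}|lborel. a u)"
    and B: "\<And>s. 0 \<le> s \<Longrightarrow> B s = (LINT u:{0..s}|lborel. b u)"
    and identity: "\<And>t. 0 \<le> t \<Longrightarrow>
      (LINT u:{0..t}|lborel. A t - A u) = (LINT s:{0..t}|lborel. a s * B (t - s))"
  shows "AE x in lborel. 0 < x \<longrightarrow> of_real x * a x = (LINT u:{0..x}|lborel. a u * b (x - u))"
proof -
  define G where "G r = (LINT s:{0..r}|lborel. a s * b (r - s))" for r
  define h where "h r = of_real r * a r - G r" for r
  have [measurable]: "G \<in> borel_measurable borel"
    unfolding G_def by (rule truncated_convolution_measurable[OF a b])
  have [measurable]: "h \<in> borel_measurable borel" unfolding h_def[abs_def] by measurable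
  have G_bound: "norm (G r) \<le> r" if "0 \<le> r" for r
    unfolding G_def by (rule truncated_convolution_bound[OF a b a_bound b_bound that])
  have linear_bound: "norm (of_real r * a r) \<le> r" if "0 \<le> r" for r
    using that a_bound[of r] by (simp add: norm_mult mult_left_le)
  have h_bound: "norm (h r) \<le> 2 * T" if "r \<in> {0..T}" for r T
    using that linear_bound[of r] G_bound[of r] norm_triangle_ineq4[of "of_real r * a r" "G r"]
    by (auto simp: h_def)
  have h_integral: "(LINT x:{0..t}|lborel. h x) = 0" if t: "0 \<le> t" for t
  proof -
    have "(LINT x:{0..t}|lborel. h x) = (LINT x:{0..t}|lborel. of_real x * a x) - (LINT x:{0..t}|lborel. G x)"
      unfolding h_def using t linear_bound G_bound
      by (intro set_integral_diff(2) bounded_set_integrable[where C=t])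
         (auto simp: emeasure_lborel_Icc_eq intro: order_trans)
    also have "(LINT x:{0..t}|lborel. of_real x * a x) = (LINT s:{0..t}|lborel. a s * B (t - s))"
      using integral_primitive_difference[OF a a_bound A t] identity[OF t] by simp
    also have "\<dots> = (LINT x:{0..t}|lborel. G x)"
      unfolding G_def by (rule integral_convolution_primitive[OF a a_bound b b_bound B t])
    finally show ?thesis by simp
  qed
  have "AE x in lborel. \<forall>n::nat. x \<in> {0..real n} \<longrightarrow> h x = 0"
    unfolding AE_all_countable
    by (intro allI interval_integrals_zero_AE_complex[where C="2 * real _"]) (auto intro: h_bound h_integral)
  then show ?thesis
  proof eventually_elim
    case (elim x)
    show ?case
    proof
      assume "0 < x"
      moreover obtain n :: nat where "x \<le> real n" using real_arch_simple by blast
      ultimately show "of_real x * a x = (LINT u:{0..x}|lborel. a u * b (x - u))"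
        using elim by (auto simp: h_def G_def)
    qed
  qed
qed

text \<open>Extending data given on \<open>[0,\<infinity>)\<close> to the whole line: by zero for the densities, and by the
  value at 0 for their primitives (which keeps them 1-Lipschitz).\<close>

lemma zero_extension:
  fixes a :: "real \<Rightarrow> complex"
  assumes a: "set_borel_measurable lborel {0..} a" and a_bound: "\<And>u. u \<ge> 0 \<Longrightarrow> norm (a u) \<le> 1"
  shows "(\<lambda>x. indicator {0..} x *\<^sub>R a x) \<in> borel_measurable borel"
    and "norm (indicator {0..} x *\<^sub>R a x) \<le> 1"
    and "(LINT u:{0..s}|lborel. indicator {0..} u *\<^sub>R a u) = (LINT u:{0..s}|lborel. a u)"
  using a a_bound[of x] by (auto simp: set_borel_measurable_def indicator_def intro!: set_lebesgue_integral_cong)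

lemma constant_extension:
  fixes A :: "real \<Rightarrow> complex"
  assumes A_lip: "\<And>s t. s \<ge> 0 \<Longrightarrow> t \<ge> 0 \<Longrightarrow> norm (A t - A s) \<le> \<bar>t - s\<bar>"
  shows "norm (A (max 0 t) - A (max 0 s)) \<le> \<bar>t - s\<bar>"
    and "(\<lambda>s. A (max 0 s)) \<in> borel_measurable borel"
proof -
  show lip: "norm (A (max 0 t) - A (max 0 s)) \<le> \<bar>t - s\<bar>" for s t
  proof -
    have "norm (A (max 0 t) - A (max 0 s)) \<le> \<bar>max 0 t - max 0 s\<bar>" by (rule A_lip) auto
    also have "\<dots> \<le> \<bar>t - s\<bar>" by (auto simp: max_def abs_if)
    finally show ?thesis .
  qed
  have "1-lipschitz_on UNIV (\<lambda>s. A (max 0 s))"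
    by (rule lipschitz_onI) (auto simp: dist_norm lip)
  then show "(\<lambda>s. A (max 0 s)) \<in> borel_measurable borel"
    by (intro borel_measurable_continuous_onI lipschitz_on_continuous_on)
qed

theorem lemma2p2:
  fixes q :: "nat \<Rightarrow> nat"
    and chi :: "nat \<Rightarrow> nat \<Rightarrow> complex"
    and A B a b :: "real \<Rightarrow> complex"
  assumes q_prime: "\<And>j. prime (q j)"
    and q_lim: "filterlim q at_top sequentially"
    and chi: "\<And>j. dirichlet_char (q j) (chi j)"
    and A_lim: "\<And>t. t \<ge> 0 \<Longrightarrow> ((\<lambda>j. charA (q j) (chi j) t) \<longlongrightarrow> A t) sequentially"
    and B_lim: "\<And>t. t \<ge> 0 \<Longrightarrow> ((\<lambda>j. charB (q j) (chi j) t) \<longlongrightarrow> B t) sequentially"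
    and A_lip: "\<And>s t. s \<ge> 0 \<Longrightarrow> t \<ge> 0 \<Longrightarrow> norm (A t - A s) \<le> \<bar>t - s\<bar>"
    and B_lip: "\<And>s t. s \<ge> 0 \<Longrightarrow> t \<ge> 0 \<Longrightarrow> norm (B t - B s) \<le> \<bar>t - s\<bar>"
    and a_meas: "set_borel_measurable lborel {0..} a"
    and b_meas: "set_borel_measurable lborel {0..} b"
    and a_bound: "\<And>u. u \<ge> 0 \<Longrightarrow> norm (a u) \<le> 1"
    and b_bound: "\<And>u. u \<ge> 0 \<Longrightarrow> norm (b u) \<le> 1"
    and A_int: "\<And>t. t \<ge> 0 \<Longrightarrow> A t = (LINT u:{0..t}|lborel. a u)"
    and B_int: "\<And>t. t \<ge> 0 \<Longrightarrow> B t = (LINT u:{0..t}|lborel. b u)"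
  shows "AE t in lborel. t > 0 \<longrightarrow> of_real t * a t = (LINT u:{0..t}|lborel. a u * b (t - u))"
proof -
  interpret character_sequence q chi
  proof
    show "2 \<le> q j" for j by (rule prime_ge_2_nat[OF q_prime])
    show "norm (chi j n) \<le> 1" for j n by (rule dirichlet_char_norm_le_1[OF chi])
    show "chi j (m * n) = chi j m * chi j n" for j m n using chi[of j] by (simp add: dirichlet_char_def)
  qed (rule q_lim)
  define a0 where "a0 x = indicator {0..} x *\<^sub>R a x" for x
  define b0 where "b0 x = indicator {0..} x *\<^sub>R b x" for x
  define A0 where "A0 s = A (max 0 s)" for s
  define B0 where "B0 s = B (max 0 s)" for s
  note a0 = zero_extension[OF a_meas a_bound, folded a0_def]
  note b0 = zero_extension[OF b_meas b_bound, folded b0_def]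
  note A0 = constant_extension[OF A_lip, folded A0_def]
  note B0 = constant_extension[OF B_lip, folded B0_def]
  have A0_int: "A0 s = (LINT u:{0..s}|lborel. a0 u)" and B0_int: "B0 s = (LINT u:{0..s}|lborel. b0 u)"
    if "0 \<le> s" for s
    using that by (simp_all add: A0_def B0_def A_int B_int a0(3) b0(3))
  have A0_lim: "(\<lambda>j. charA (q j) (chi j) s) \<longlonglongrightarrow> A0 s"
    and B0_lim: "(\<lambda>j. charB (q j) (chi j) s) \<longlonglongrightarrow> B0 s" if "0 \<le> s" for s
    using A_lim[OF that] B_lim[OF that] that by (simp_all add: A0_def B0_def)
  have identity: "(LINT u:{0..t}|lborel. A0 t - A0 u) = (LINT s:{0..t}|lborel. a0 s * B0 (t - s))"
    if "0 \<le> t" for t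
    by (rule limit_identity[OF a0(1,2) A0_int A0(2) _ A0_lim B0(2) B0_lim that]) (simp_all add: A0(1))
  have "AE x in lborel. 0 < x \<longrightarrow> of_real x * a0 x = (LINT u:{0..x}|lborel. a0 u * b0 (x - u))"
    using a0(1,2) b0(1,2) A0_int B0_int identity by (rule convolution_identity_AE)
  then show ?thesis
    by eventually_elim (auto simp: a0_def b0_def intro!: set_lebesgue_integral_cong)
qed

end
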